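(* The language $L_5\subseteq\{a,b\}^*$ does not belong to $Pol(\mathcal{C}om)(\{a,b\})$.
   Context: $L_5$ is the language recognized by the deterministic automaton with states $1,2,3,4,5$, initial state $1$, accepting set $\{5\}$, and transitions $\delta(1,a)=\delta(1,b)=2$, $\delta(2,a)=5$, $\delta(2,b)=3$, $\delta(3,a)=4$, $\delta(3,b)=5$, $\delta(4,a)=3$, $\delta(4,b)=1$, $\delta(5,a)=\delta(5,b)=5$. $\mathcal{C}om(\Sigma)$ is the set of regular languages over $\Sigma$ whose syntactic monoid ($\Sigma^*/\equiv_L$, where $x\equiv_L y$ iff $uxv\in L\Leftrightarrow uyv\in L$ for all $u,v$) is commutative; $Pol(\mathcal{C}om)(\Sigma)$ is the set of finite unions of languages $L_0a_1L_1\cdots a_kL_k$ with $k\ge0$, $a_i\in\Sigma$, $L_i\in\mathcal{C}om(\Sigma)$. *)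

theory Defs
  imports Main
begin

datatype ab = a | b

definition lconc :: "'s list set \<Rightarrow> 's list set \<Rightarrow> 's list set" where
  "lconc L M = {u @ v | u v. u \<in> L \<and> v \<in> M}"

definition regular :: "'s list set \<Rightarrow> bool" where
  "regular L \<longleftrightarrow> (\<exists>(Q :: nat set) q0 (\<delta> :: nat \<Rightarrow> 's \<Rightarrow> nat) F.
      finite Q \<and> q0 \<in> Q \<and> F \<subseteq> Q \<and> (\<forall>q\<in>Q. \<forall>c. \<delta> q c \<in> Q) \<and>
      L = {w. foldl \<delta> q0 w \<in> F})"

definition synt_equiv :: "'s list set \<Rightarrow> 's list \<Rightarrow> 's list \<Rightarrow> bool" where
  "synt_equiv L x y \<longleftrightarrow> (\<forall>u v. u @ x @ v \<in> L \<longleftrightarrow> u @ y @ v \<in> L)"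

definition synt_monoid_commutative :: "'s list set \<Rightarrow> bool" where
  "synt_monoid_commutative L \<longleftrightarrow> (\<forall>x y. synt_equiv L (x @ y) (y @ x))"

text \<open>Com(Sigma), Sigma being the whole (finite) letter type.\<close>
definition Com :: "'s list set set" where
  "Com = {L. regular L \<and> synt_monoid_commutative L}"

text \<open>Marked product L0 a1 L1 ... ak Lk.\<close>
fun marked_prod :: "'s list set \<Rightarrow> ('s \<times> 's list set) list \<Rightarrow> 's list set" where
  "marked_prod L0 [] = L0"
| "marked_prod L0 ((c, L1) # rest) = lconc L0 (lconc {[c]} (marked_prod L1 rest))"

definition PolCom :: "'s list set set" where
  "PolCom = {L. \<exists>ms :: ('s list set \<times> ('s \<times> 's list set) list) list.
      (\<forall>(L0, rest) \<in> set ms. L0 \<in> Com \<and> (\<forall>(c, Li) \<in> set rest. Li \<in> Com)) \<and>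
      L = (\<Union>(L0, rest) \<in> set ms. marked_prod L0 rest)}"

definition delta5 :: "nat \<Rightarrow> ab \<Rightarrow> nat" where
  "delta5 q c =
     (if q = 1 then 2
      else if q = 2 then (if c = a then 5 else 3)
      else if q = 3 then (if c = a then 4 else 5)
      else if q = 4 then (if c = a then 3 else 1)
      else if q = 5 then 5
      else q)"

definition L5 :: "ab list set" where
  "L5 = {w. foldl delta5 1 w \<in> {5}}"

end

theory Submission
  imports Defs "HOL-Library.Multiset" "HOL-Library.FuncSet" "HOL-Library.Infinite_Set"
begin

(* Fix the word x = abab.  Every regular language K is
   eventually periodic along the powers of x: there are N and P > 0 such that
   for n >= N the membership of s x^n in K does not change when n grows by a
   multiple of P.  If moreover the syntactic monoid of K is commutative, K is
   closed under permuting letters, so inside a long block x^n of a word of K we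
   may insert any permutation z of x^P.  In a marked product L0 a1 L1 ... ak Lk
   of such languages, a block x^n with n >= (k+1)N contains a sub-block x^N
   lying entirely inside one factor, so the same insertion is possible for the
   product and hence for every language of Pol(Com).
   For L5 the word x^n aa is accepted (x loops at state 1), but inserting
   z = bbaa x^(P-1) into the block of x's moves the automaton from state 1 to
   state 3, where x loops again and the final aa leads back to state 3, so the
   resulting word is rejected; thus L5 is not in Pol(Com). *)

definition lpow :: "'a list \<Rightarrow> nat \<Rightarrow> 'a list" where
  "lpow x n = concat (replicate n x)"

lemma lpow_0 [simp]: "lpow x 0 = []"
  by (simp add: lpow_def)

lemma lpow_Suc [simp]: "lpow x (Suc n) = x @ lpow x n"
  by (simp add: lpow_def)

lemma lpow_add: "lpow x (i + j) = lpow x i @ lpow x j"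
  by (simp add: lpow_def replicate_add)

section \<open>Eventual periodicity of regular languages along powers of a word\<close>

definition pow_periodic :: "'a list set \<Rightarrow> 'a list \<Rightarrow> nat \<Rightarrow> nat \<Rightarrow> bool" where
  "pow_periodic K x N P \<longleftrightarrow>
     (\<forall>s n c. N \<le> n \<longrightarrow> (s @ lpow x n \<in> K \<longleftrightarrow> s @ lpow x (n + c * P) \<in> K))"

text \<open>A larger threshold and a multiple of the period work as well; this lets
  several languages share one threshold and one period.\<close>
lemma pow_periodic_mono:
  assumes "pow_periodic K x N P" "N \<le> N'" "P dvd P'"
  shows "pow_periodic K x N' P'"
  unfolding pow_periodic_def
proof (intro allI impI)
  fix s n c assume "N' \<le> n"
  obtain d where d: "P' = P * d" using assms(3) by blast
  have "s @ lpow x n \<in> K \<longleftrightarrow> s @ lpow x (n + (c * d) * P) \<in> K"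
    using assms(1,2) \<open>N' \<le> n\<close> unfolding pow_periodic_def by simp
  then show "s @ lpow x n \<in> K \<longleftrightarrow> s @ lpow x (n + c * P') \<in> K"
    by (simp add: d ac_simps)
qed

lemma foldl_closed:
  assumes "\<forall>q\<in>Q. \<forall>c. \<delta> q c \<in> Q" "q \<in> Q"
  shows "foldl \<delta> q w \<in> Q"
  using assms(2) by (induction w arbitrary: q) (use assms(1) in auto)

text \<open>Pumping along x: the action of x^n on the finitely many states
  takes finitely many values, so it repeats, and from then on it is periodic.\<close>
lemma regular_pow_periodic:
  assumes "regular K"
  shows "\<exists>N P. 0 < P \<and> pow_periodic K x N P"
proof -
  obtain Q q0 \<delta> F where fin: "finite (Q :: nat set)" and q0: "q0 \<in> Q" and
    closed: "\<forall>q\<in>Q. \<forall>c. \<delta> q c \<in> Q" and K: "K = {w. foldl \<delta> q0 w \<in> F}"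
    using assms unfolding regular_def by blast
  define act where "act n = restrict (\<lambda>q. foldl \<delta> q (lpow x n)) Q" for n
  have "range act \<subseteq> PiE Q (\<lambda>_. Q)"
    using foldl_closed[OF closed] by (auto simp: act_def)
  moreover have "finite (PiE Q (\<lambda>_. Q))" using fin by (simp add: finite_PiE)
  ultimately have "finite (range act)" by (rule finite_subset)
  then have "\<not> inj act" using range_inj_infinite by blast
  then obtain m m' where "m \<noteq> m'" "act m = act m'"
    unfolding inj_def by blast
  then obtain m1 m2 where m12: "m1 < m2" "act m1 = act m2"
    by (metis linorder_neqE_nat)
  define P where "P = m2 - m1"
  have repeat: "foldl \<delta> q (lpow x m2) = foldl \<delta> q (lpow x m1)" if "q \<in> Q" for q
    using fun_cong[OF m12(2), of q] that by (simp add: act_def)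
  have shift: "foldl \<delta> q (lpow x (m1 + c * P)) = foldl \<delta> q (lpow x m1)" if "q \<in> Q" for q c
  proof (induction c)
    case (Suc c)
    have "m1 + Suc c * P = m2 + c * P" using m12(1) by (simp add: P_def)
    then have "foldl \<delta> q (lpow x (m1 + Suc c * P))
        = foldl \<delta> (foldl \<delta> q (lpow x m2)) (lpow x (c * P))"
      by (simp only: lpow_add foldl_append)
    also have "\<dots> = foldl \<delta> q (lpow x (m1 + c * P))"
      by (simp only: repeat[OF that] lpow_add foldl_append)
    finally show ?case using Suc by simp
  qed simp
  have "pow_periodic K x m1 P"
    unfolding pow_periodic_def
  proof (intro allI impI)
    fix s n c assume "m1 \<le> n"
    then obtain d where n: "n = m1 + d" using le_Suc_ex by blast
    have "foldl \<delta> q0 s \<in> Q" using foldl_closed[OF closed q0] .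
    then have "foldl \<delta> (foldl \<delta> q0 s) (lpow x (m1 + c * P))
        = foldl \<delta> (foldl \<delta> q0 s) (lpow x m1)" by (rule shift)
    moreover have "lpow x (n + c * P) = lpow x (m1 + c * P) @ lpow x d"
      using n lpow_add[of x "m1 + c * P" d] by (simp add: ac_simps)
    ultimately show "s @ lpow x n \<in> K \<longleftrightarrow> s @ lpow x (n + c * P) \<in> K"
      unfolding K n by (simp add: lpow_add)
  qed
  moreover have "0 < P" using m12(1) by (simp add: P_def)
  ultimately show ?thesis by blast
qed

lemma regular_family_pow_periodic:
  assumes "finite \<K>" "\<forall>K\<in>\<K>. regular K"
  shows "\<exists>N P. 0 < P \<and> (\<forall>K\<in>\<K>. pow_periodic K x N P)"
  using assms
proof (induction \<K> rule: finite_induct)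
  case empty
  show ?case by (intro exI[of _ 0] exI[of _ 1]) simp
next
  case (insert K \<K>)
  obtain N1 P1 where 1: "0 < P1" "pow_periodic K x N1 P1"
    using regular_pow_periodic insert.prems by blast
  obtain N2 P2 where 2: "0 < P2" "\<forall>K\<in>\<K>. pow_periodic K x N2 P2"
    using insert.IH insert.prems by blast
  have "\<forall>K'\<in>insert K \<K>. pow_periodic K' x (N1 + N2) (P1 * P2)"
    using 1(2) 2(2) pow_periodic_mono by (metis dvd_triv_left dvd_triv_right insertE le_add1 le_add2)
  then show ?case using 1(1) 2(1) by (intro exI[of _ "N1 + N2"] exI[of _ "P1 * P2"]) simp
qed

section \<open>Languages with commutative syntactic monoid\<close>

text \<open>Permuting a suffix, one letter at a time: the first letter of u is moved to its
  place in v, which commutativity allows in any context.\<close>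
lemma commutative_mset_closed_aux:
  assumes "synt_monoid_commutative K" "mset u = mset v"
  shows "p @ u \<in> K \<longleftrightarrow> p @ v \<in> K"
  using assms(2)
proof (induction u arbitrary: p v)
  case (Cons c u)
  have "c \<in> set v" using Cons.prems by (metis list.set_intros(1) set_mset_mset)
  then obtain v1 v2 where v: "v = v1 @ c # v2" by (meson split_list)
  have "mset u = mset (v1 @ v2)" using Cons.prems v by simp
  then have "p @ c # u \<in> K \<longleftrightarrow> (p @ [c]) @ v1 @ v2 \<in> K"
    using Cons.IH[of "v1 @ v2" "p @ [c]"] by simp
  also have "\<dots> \<longleftrightarrow> p @ ([c] @ v1) @ v2 \<in> K" by simp
  also have "\<dots> \<longleftrightarrow> p @ (v1 @ [c]) @ v2 \<in> K"
    using assms(1) unfolding synt_monoid_commutative_def synt_equiv_def by blast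
  finally show ?case using v by simp
qed simp

lemma commutative_mset_closed:
  assumes "synt_monoid_commutative K" "mset u = mset v"
  shows "u \<in> K \<longleftrightarrow> v \<in> K"
  using commutative_mset_closed_aux[OF assms, of "[]"] by simp

text \<open>Commutativity moves the block to the end,
  periodicity lengthens it, commutativity rearranges the result.\<close>
lemma commutative_pow_insert:
  assumes "pow_periodic K x N P" "synt_monoid_commutative K" "N \<le> n"
    and "s @ lpow x n @ r \<in> K" "mset z = mset (lpow x (c * P))"
  shows "s @ z @ lpow x n @ r \<in> K"
proof -
  have "(s @ r) @ lpow x n \<in> K"
    using commutative_mset_closed[OF assms(2), of "s @ lpow x n @ r"] assms(4) by simp
  then have "(s @ r) @ lpow x (n + c * P) \<in> K"
    using assms(1,3) unfolding pow_periodic_def by blast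
  moreover have "mset ((s @ r) @ lpow x (n + c * P)) = mset (s @ z @ lpow x n @ r)"
    using assms(5) by (simp add: lpow_add)
  ultimately show ?thesis using commutative_mset_closed[OF assms(2)] by blast
qed

section \<open>Marked products\<close>

lemma mem_marked_prod_Cons:
  "w \<in> marked_prod L0 ((c, L1) # rest) \<longleftrightarrow>
    (\<exists>u v. w = u @ [c] @ v \<and> u \<in> L0 \<and> v \<in> marked_prod L1 rest)"
  by (auto simp: lconc_def)

lemma marker_position:
  assumes "p @ t = u @ [c] @ v"
  shows "(\<exists>us. u = p @ us) \<or> (\<exists>v'. v = v' @ t \<and> u @ [c] @ v' = p)"
proof -
  from assms obtain us where
    "(u = p @ us \<and> us @ [c] @ v = t) \<or> (u @ us = p \<and> [c] @ v = us @ t)"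
    unfolding append_eq_append_conv2 by metis
  then show ?thesis by (cases us) auto
qed

text \<open>Insertion into a marked product whose factors are periodic and commutative:
  a block x^n with n \<ge> (k+1)N has its first N copies of x inside the first
  factor, or the first marker lies within them and we recurse on the rest.\<close>
lemma marked_prod_pow_insert:
  assumes "\<forall>K\<in>insert L0 (snd ` set rest). pow_periodic K x N P \<and> synt_monoid_commutative K"
    and "(length rest + 1) * N \<le> n" "s @ lpow x n @ r \<in> marked_prod L0 rest"
    and "mset z = mset (lpow x (c * P))"
  shows "\<exists>i \<le> n. s @ lpow x i @ z @ lpow x (n - i) @ r \<in> marked_prod L0 rest"
  using assms(1-3)
proof (induction rest arbitrary: L0 s n)
  case Nil
  then have "s @ z @ lpow x n @ r \<in> L0"
    using commutative_pow_insert[OF _ _ _ _ assms(4)] by auto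
  then show ?case by (intro exI[of _ 0]) simp
next
  case (Cons cL rest)
  obtain c1 L1 where cL: "cL = (c1, L1)" by fastforce
  from Cons.prems(3) obtain u v where uv: "s @ lpow x n @ r = u @ [c1] @ v" "u \<in> L0"
    "v \<in> marked_prod L1 rest" unfolding cL mem_marked_prod_Cons by blast
  have "N \<le> n" using Cons.prems(2) by simp
  then have split: "lpow x n = lpow x N @ lpow x (n - N)" using lpow_add[of x N "n - N"] by simp
  have L0: "pow_periodic L0 x N P" "synt_monoid_commutative L0" using Cons.prems(1) by auto
  from uv(1) have cut: "(s @ lpow x N) @ (lpow x (n - N) @ r) = u @ [c1] @ v" by (simp add: split)
  consider (in_L0) us where "u = (s @ lpow x N) @ us"
    | (in_rest) v' where "v = v' @ lpow x (n - N) @ r" "u @ [c1] @ v' = s @ lpow x N"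
    using marker_position[OF cut] by blast
  then show ?case
  proof cases
    case in_L0
    then have "s @ z @ lpow x N @ us \<in> L0"
      using commutative_pow_insert[OF L0 le_refl _ assms(4), of s us] uv(2) by simp
    moreover have "s @ lpow x 0 @ z @ lpow x (n - 0) @ r = (s @ z @ lpow x N @ us) @ [c1] @ v"
      using uv(1) in_L0 by (simp add: split)
    ultimately show ?thesis using uv(3) unfolding cL mem_marked_prod_Cons by blast
  next
    case in_rest
    have "\<forall>K\<in>insert L1 (snd ` set rest). pow_periodic K x N P \<and> synt_monoid_commutative K"
      using Cons.prems(1) cL by auto
    moreover have "(length rest + 1) * N \<le> n - N" using Cons.prems(2) by simp
    ultimately obtain i where i: "i \<le> n - N"
      "v' @ lpow x i @ z @ lpow x (n - N - i) @ r \<in> marked_prod L1 rest"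
      using Cons.IH[of L1 "n - N" v'] uv(3) in_rest(1) by blast
    have "s @ lpow x (N + i) @ z @ lpow x (n - (N + i)) @ r
        = u @ [c1] @ (v' @ lpow x i @ z @ lpow x (n - N - i) @ r)"
      using in_rest(2) by (simp add: lpow_add diff_diff_add)
    then have "s @ lpow x (N + i) @ z @ lpow x (n - (N + i)) @ r \<in> marked_prod L0 (cL # rest)"
      using i(2) uv(2) unfolding cL mem_marked_prod_Cons by blast
    moreover have "N + i \<le> n" using i(1) \<open>N \<le> n\<close> by simp
    ultimately show ?thesis by blast
  qed
qed

definition pow_insertable :: "'a list set \<Rightarrow> 'a list \<Rightarrow> nat \<Rightarrow> nat \<Rightarrow> bool" where
  "pow_insertable L x N P \<longleftrightarrow>
     (\<forall>n s r z. N \<le> n \<longrightarrow> s @ lpow x n @ r \<in> L \<longrightarrow> mset z = mset (lpow x P) \<longrightarrow>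
        (\<exists>i \<le> n. s @ lpow x i @ z @ lpow x (n - i) @ r \<in> L))"

text \<open>Every language of Pol(Com) has the insertion property along every word x.  The
  threshold is chosen so that a long block always leaves N copies of x in one factor.\<close>
lemma PolCom_pow_insertable:
  assumes "L \<in> PolCom"
  shows "\<exists>N P. 0 < P \<and> pow_insertable L x N P"
proof -
  obtain ms where Com: "\<forall>(L0, rest) \<in> set ms. L0 \<in> Com \<and> (\<forall>(c, Li) \<in> set rest. Li \<in> Com)"
    and L: "L = (\<Union>(L0, rest) \<in> set ms. marked_prod L0 rest)"
    using assms unfolding PolCom_def by blast
  define factors where "factors = (\<Union>(L0, rest) \<in> set ms. insert L0 (snd ` set rest))"
  have factors_Com: "\<forall>K\<in>factors. regular K \<and> synt_monoid_commutative K"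
  proof
    fix K assume "K \<in> factors"
    then obtain L0 rest where "(L0, rest) \<in> set ms" "K \<in> insert L0 (snd ` set rest)"
      unfolding factors_def by blast
    then have "K \<in> Com" using Com by fastforce
    then show "regular K \<and> synt_monoid_commutative K" by (simp add: Com_def)
  qed
  have "finite factors" unfolding factors_def by auto
  then obtain N P where P: "0 < P" and periodic: "\<forall>K\<in>factors. pow_periodic K x N P"
    using regular_family_pow_periodic[of factors] factors_Com by blast
  have "finite ((length \<circ> snd) ` set ms)" by simp
  then obtain k where k: "\<forall>l \<in> (length \<circ> snd) ` set ms. l \<le> k"
    using finite_nat_set_iff_bounded_le by blast
  have "\<exists>i \<le> n. s @ lpow x i @ z @ lpow x (n - i) @ r \<in> L"
    if long: "(k + 1) * N \<le> n" and in_L: "s @ lpow x n @ r \<in> L"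
      and perm: "mset z = mset (lpow x P)" for n s r z
  proof -
    obtain L0 rest where mem: "(L0, rest) \<in> set ms" "s @ lpow x n @ r \<in> marked_prod L0 rest"
      using in_L unfolding L by blast
    have "length rest \<le> k" using k mem(1) by force
    then have "(length rest + 1) * N \<le> (k + 1) * N" by simp
    then have len: "(length rest + 1) * N \<le> n" using long by (rule le_trans)
    have "\<forall>K\<in>insert L0 (snd ` set rest). pow_periodic K x N P \<and> synt_monoid_commutative K"
      using mem(1) periodic factors_Com unfolding factors_def by blast
    moreover have "mset z = mset (lpow x (1 * P))" using perm by simp
    ultimately obtain i where "i \<le> n" "s @ lpow x i @ z @ lpow x (n - i) @ r \<in> marked_prod L0 rest"
      using marked_prod_pow_insert len mem(2) by blast
    then show ?thesis using mem(1) unfolding L by blast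
  qed
  then have "pow_insertable L x ((k + 1) * N) P" unfolding pow_insertable_def by blast
  then show ?thesis using P by blast
qed

section \<open>The language L5\<close>

lemma delta5_abab_fixes_1: "foldl delta5 1 (lpow [a, b, a, b] m) = 1"
  by (induction m) (simp_all add: delta5_def)

lemma delta5_abab_fixes_3: "foldl delta5 3 (lpow [a, b, a, b] m) = 3"
  by (induction m) (simp_all add: delta5_def)

theorem mainTheorem16:
  shows "L5 \<notin> (PolCom :: ab list set set)"
proof
  define x where "x = [a, b, a, b]"
  assume "L5 \<in> (PolCom :: ab list set set)"
  then obtain N P where P: "0 < P" and insertable: "pow_insertable L5 x N P"
    using PolCom_pow_insertable by blast
  define z where "z = [b, b, a, a] @ lpow x (P - 1)"
  have "mset z = mset (lpow x (Suc (P - 1)))" by (simp add: z_def x_def)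
  then have z: "mset z = mset (lpow x P)" using P by simp
  have "lpow x N @ [a, a] \<in> L5"
    using delta5_abab_fixes_1[of N] by (simp add: L5_def delta5_def x_def)
  then obtain i where "lpow x i @ z @ lpow x (N - i) @ [a, a] \<in> L5"
    using insertable z unfolding pow_insertable_def by (metis append_Nil order_refl)
  moreover have "foldl delta5 1 (lpow x i @ z @ lpow x (N - i) @ [a, a]) = 3"
    using delta5_abab_fixes_1[of i] delta5_abab_fixes_3[of "P - 1"] delta5_abab_fixes_3[of "N - i"]
    by (simp add: z_def x_def delta5_def)
  ultimately show False by (simp add: L5_def)
qed

end
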